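(* Let $x^*\in\mathbb{R}^n$ satisfy $Ax^*=b$, let $\ell\ge1$ and let $x_1,\ldots,x_\ell\in\mathbb{R}^n$ be affinely independent points such that \[x_\ell=\operatorname{argmin}_{\xi\in\operatorname{aff}(x_1,\ldots,x_\ell)}\|\xi-x^*\|^2\] and $P(x_\ell)\notin\operatorname{aff}(x_1,\ldots,x_\ell)$. Let \[V=(x_1-x_\ell,\ldots,x_{\ell-1}-x_\ell)\in\mathbb{R}^{n\times(\ell-1)},\quad M=(V,\,P(x_\ell)-x_\ell)\in\mathbb{R}^{n\times\ell},\quad \gamma=\tfrac12\big(\|r(x_\ell)\|^2+\|P(x_\ell)-x_\ell\|^2\big).\] Then the minimizer $s^*=\operatorname{argmin}_{s\in\mathbb{R}^\ell}\|x_\ell+Ms-x^*\|^2$ exists, is unique, and is the unique solution of the linear system $M^TMs=\gamma e_\ell$, where $e_\ell\in\mathbb{R}^\ell$ is the $\ell$-th unit vector. Moreover, \[\|x_\ell-x^*\|^2-\|x_\ell+Ms^*-x^*\|^2=\gamma s^*_\ell=\gamma^2\frac{\det(V^TV)}{\det(M^TM)}.\]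
   Context: Let $A=(a_1,\ldots,a_m)^T\in\mathbb{R}^{m\times n}$ with rows $a_j\in\mathbb{R}^n\setminus\{0\}$, and let $b\in\mathbb{R}^m$ lie in the range of $A$. Norms are Euclidean. For $j=1,\ldots,m$ define the projectors $P_j:\mathbb{R}^n\to\mathbb{R}^n$, $P_j(x)=\big(I-\frac{a_ja_j^T}{\|a_j\|^2}\big)x+\frac{b_j}{\|a_j\|^2}a_j$ (the orthogonal projection onto $\{z:a_j^Tz=b_j\}$), and the Kaczmarz cycle $P=P_m\circ\cdots\circ P_1$. The residual $r:\mathbb{R}^n\to\mathbb{R}^m$ is defined by $r_1(x)=(a_1^Tx-b_1)/\|a_1\|$ and $r_j(x)=(a_j^T(P_{j-1}\circ\cdots\circ P_1)(x)-b_j)/\|a_j\|$ for $j=2,\ldots,m$. $\operatorname{aff}(\cdot)$ denotes the affine hull. When $\ell=1$, $V$ is the empty matrix and $\det(V^TV)$ is taken to be $1$. *)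

theory Defs imports "HOL-Analysis.Analysis" "Jordan_Normal_Form.Determinant" begin

(* Rows a_1,...,a_m of A are  a 1, ..., a m;  right-hand side b_1,...,b_m is  b 1, ..., b m. *)

definition kproj :: "(nat \<Rightarrow> real^'n) \<Rightarrow> (nat \<Rightarrow> real) \<Rightarrow> nat \<Rightarrow> real^'n \<Rightarrow> real^'n" where
  "kproj a b j x = x - ((a j \<bullet> x) / (norm (a j))^2) *\<^sub>R a j + (b j / (norm (a j))^2) *\<^sub>R a j"

fun kpart :: "(nat \<Rightarrow> real^'n) \<Rightarrow> (nat \<Rightarrow> real) \<Rightarrow> nat \<Rightarrow> real^'n \<Rightarrow> real^'n" where
  "kpart a b 0 x = x"
| "kpart a b (Suc k) x = kproj a b (Suc k) (kpart a b k x)"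

definition kcycle :: "(nat \<Rightarrow> real^'n) \<Rightarrow> (nat \<Rightarrow> real) \<Rightarrow> nat \<Rightarrow> real^'n \<Rightarrow> real^'n" where
  "kcycle a b m = kpart a b m"

definition kresid :: "(nat \<Rightarrow> real^'n) \<Rightarrow> (nat \<Rightarrow> real) \<Rightarrow> nat \<Rightarrow> real^'n \<Rightarrow> real" where
  "kresid a b j x = (a j \<bullet> kpart a b (j - 1) x - b j) / norm (a j)"

definition kresid_sqnorm :: "(nat \<Rightarrow> real^'n) \<Rightarrow> (nat \<Rightarrow> real) \<Rightarrow> nat \<Rightarrow> real^'n \<Rightarrow> real" where
  "kresid_sqnorm a b m x = (\<Sum>j = 1..m. (kresid a b j x)^2)"

end

theory Submission imports Defs begin

(*
  The Kaczmarz sweep is a composition of orthogonal projections onto hyperplanes through xstar, so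
  Pythagoras along the sweep gives |x - xstar|^2 = |P x - xstar|^2 + |r(x)|^2, which rewrites as
  (x_l - xstar) . (P x_l - x_l) = -gamma.  Since x_l is the point of the affine hull closest to xstar,
  x_l - xstar is orthogonal to the columns of V.  Hence the normal equations of the least-squares
  problem min_s |(x_l - xstar) + M s|^2 read M^T M s = gamma e_l; M^T M is nonsingular because the
  columns of M are independent (P x_l lies outside the affine hull).  At the solution the residual is
  orthogonal to M s, so the decrease is -(x_l - xstar) . M s = gamma s_l, and Cramer's rule with a
  Laplace expansion along the last column gives s_l = gamma det(V^T V) / det(M^T M).
*)

section \<open>Gram matrices and least squares\<close>

definition col_comb :: "nat \<Rightarrow> (nat \<Rightarrow> 'a::real_vector) \<Rightarrow> real vec \<Rightarrow> 'a" where
  "col_comb k c s = (\<Sum>i<k. s $ i *\<^sub>R c i)"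

definition gram_mat :: "nat \<Rightarrow> (nat \<Rightarrow> 'a::real_inner) \<Rightarrow> real mat" where
  "gram_mat k c = mat k k (\<lambda>(i, j). c i \<bullet> c j)"

definition cols_independent :: "nat \<Rightarrow> (nat \<Rightarrow> 'a::real_vector) \<Rightarrow> bool" where
  "cols_independent k c \<longleftrightarrow> (\<forall>t. (\<Sum>i<k. t i *\<^sub>R c i) = 0 \<longrightarrow> (\<forall>i<k. t i = 0))"

definition least_squares_min :: "nat \<Rightarrow> (nat \<Rightarrow> 'a::real_inner) \<Rightarrow> 'a \<Rightarrow> real vec \<Rightarrow> bool" where
  "least_squares_min k c w s \<longleftrightarrow> s \<in> carrier_vec k \<and>
     (\<forall>t\<in>carrier_vec k. (norm (w + col_comb k c s))^2 \<le> (norm (w + col_comb k c t))^2)"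

lemma gram_mat_carrier [simp]: "gram_mat k c \<in> carrier_mat k k"
  by (simp add: gram_mat_def)

lemma inner_col_comb_left: "col_comb k c s \<bullet> v = (\<Sum>i<k. s $ i * (c i \<bullet> v))"
  by (simp add: col_comb_def inner_sum_left)

lemma gram_mat_mult_vec:
  assumes "s \<in> carrier_vec k" "i < k"
  shows "(gram_mat k c *\<^sub>v s) $ i = c i \<bullet> col_comb k c s"
  using assms by (simp add: gram_mat_def col_comb_def scalar_prod_def inner_sum_right
      lessThan_atLeast0 mult.commute)

lemma col_comb_diff: "col_comb k c t - col_comb k c s = (\<Sum>i<k. (t $ i - s $ i) *\<^sub>R c i)"
  by (simp add: col_comb_def sum_subtractf scaleR_diff_left)

lemma col_comb_inj:
  assumes "cols_independent k c" "s \<in> carrier_vec k" "t \<in> carrier_vec k"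
    and "col_comb k c t = col_comb k c s"
  shows "t = s"
proof -
  have "(\<Sum>i<k. (t $ i - s $ i) *\<^sub>R c i) = 0"
    using assms(4) col_comb_diff[of k c t s] by simp
  with assms(1) have "\<forall>i<k. t $ i - s $ i = 0"
    unfolding cols_independent_def by (auto dest: spec[of _ "\<lambda>i. t $ i - s $ i"])
  then show ?thesis
    using assms(2,3) by (intro eq_vecI) auto
qed

lemma det_gram_mat_neq_0:
  assumes "cols_independent k c"
  shows "det (gram_mat k c) \<noteq> 0"
proof
  assume "det (gram_mat k c) = 0"
  then obtain v where v: "v \<in> carrier_vec k" "v \<noteq> 0\<^sub>v k" "gram_mat k c *\<^sub>v v = 0\<^sub>v k"
    using det_0_iff_vec_prod_zero[OF gram_mat_carrier] by auto
  have "(norm (col_comb k c v))^2 = (\<Sum>i<k. v $ i * (gram_mat k c *\<^sub>v v) $ i)"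
    using v(1) by (simp add: power2_norm_eq_inner inner_col_comb_left gram_mat_mult_vec)
  also have "\<dots> = 0"
    using v(3) by simp
  finally have "col_comb k c v = col_comb k c (0\<^sub>v k)"
    by (simp add: col_comb_def)
  then have "v = 0\<^sub>v k"
    using col_comb_inj[OF assms] v(1) by simp
  with v(2) show False ..
qed

lemma det_neq_0_imp_solvable:
  fixes A :: "'a::field mat"
  assumes A: "A \<in> carrier_mat n n" and "det A \<noteq> 0" and e: "e \<in> carrier_vec n"
  shows "\<exists>s\<in>carrier_vec n. A *\<^sub>v s = e"
proof
  let ?s = "(1 / det A) \<cdot>\<^sub>v (adj_mat A *\<^sub>v e)"
  show "?s \<in> carrier_vec n"
    using adj_mat(1)[OF A] e by simp
  have "A *\<^sub>v ?s = (1 / det A) \<cdot>\<^sub>v ((A * adj_mat A) *\<^sub>v e)"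
    using A adj_mat(1)[OF A] e by (simp add: mult_mat_vec assoc_mult_mat_vec)
  also have "\<dots> = (1 / det A) \<cdot>\<^sub>v (det A \<cdot>\<^sub>v e)"
    using adj_mat(2)[OF A] e by auto
  also have "\<dots> = e"
    using \<open>det A \<noteq> 0\<close> by (simp add: smult_smult_assoc)
  finally show "A *\<^sub>v ?s = e" .
qed

lemma normal_equations_iff:
  assumes "s \<in> carrier_vec k"
  shows "gram_mat k c *\<^sub>v s = vec k (\<lambda>i. - (w \<bullet> c i))
    \<longleftrightarrow> (\<forall>i<k. (w + col_comb k c s) \<bullet> c i = 0)"
proof -
  have "gram_mat k c *\<^sub>v s = vec k (\<lambda>i. - (w \<bullet> c i))
      \<longleftrightarrow> (\<forall>i<k. (gram_mat k c *\<^sub>v s) $ i = - (w \<bullet> c i))"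
    using assms carrier_matD[OF gram_mat_carrier] by (auto intro!: eq_vecI)
  also have "\<dots> \<longleftrightarrow> (\<forall>i<k. (w + col_comb k c s) \<bullet> c i = 0)"
    using assms
    by (simp add: gram_mat_mult_vec inner_add_right inner_commute[of _ "c _"] add.commute
        eq_neg_iff_add_eq_0)
  finally show ?thesis .
qed

lemma norm_sq_residual_pythagoras:
  assumes "\<forall>i<k. (w + col_comb k c s) \<bullet> c i = 0"
  shows "(norm (w + col_comb k c t))^2
    = (norm (w + col_comb k c s))^2 + (norm (col_comb k c t - col_comb k c s))^2"
proof -
  have "(w + col_comb k c s) \<bullet> (col_comb k c t - col_comb k c s) = 0"
    using assms by (simp add: col_comb_diff inner_sum_right)
  then have "(norm ((w + col_comb k c s) + (col_comb k c t - col_comb k c s)))^2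
      = (norm (w + col_comb k c s))^2 + (norm (col_comb k c t - col_comb k c s))^2"
    by (simp add: dot_norm)
  then show ?thesis
    by simp
qed

lemma normal_equations_solvable:
  assumes "cols_independent k c"
  shows "\<exists>s\<in>carrier_vec k. \<forall>i<k. (w + col_comb k c s) \<bullet> c i = 0"
proof -
  obtain s where "s \<in> carrier_vec k" "gram_mat k c *\<^sub>v s = vec k (\<lambda>i. - (w \<bullet> c i))"
    using det_neq_0_imp_solvable[OF gram_mat_carrier det_gram_mat_neq_0[OF assms] vec_carrier]
    by blast
  then show ?thesis
    using normal_equations_iff by blast
qed

lemma least_squares_min_eq_normal_solution:
  assumes "cols_independent k c" "least_squares_min k c w s"
    and "s0 \<in> carrier_vec k" "\<forall>i<k. (w + col_comb k c s0) \<bullet> c i = 0"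
  shows "s = s0"
proof -
  have "(norm (w + col_comb k c s))^2
      = (norm (w + col_comb k c s0))^2 + (norm (col_comb k c s - col_comb k c s0))^2"
    using norm_sq_residual_pythagoras[OF assms(4)] .
  moreover have "(norm (w + col_comb k c s))^2 \<le> (norm (w + col_comb k c s0))^2"
    using assms(2,3) by (simp add: least_squares_min_def)
  ultimately have "col_comb k c s = col_comb k c s0"
    by simp
  then show ?thesis
    using col_comb_inj[OF assms(1,3)] assms(2) by (simp add: least_squares_min_def)
qed

lemma least_squares_min_iff:
  assumes "cols_independent k c" "s \<in> carrier_vec k"
  shows "least_squares_min k c w s \<longleftrightarrow> (\<forall>i<k. (w + col_comb k c s) \<bullet> c i = 0)"
proof
  assume "\<forall>i<k. (w + col_comb k c s) \<bullet> c i = 0"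
  then have "(norm (w + col_comb k c s))^2 \<le> (norm (w + col_comb k c t))^2" for t
    using norm_sq_residual_pythagoras[of k w c s t] by simp
  then show "least_squares_min k c w s"
    using assms(2) by (simp add: least_squares_min_def)
next
  assume "least_squares_min k c w s"
  moreover obtain s0 where "s0 \<in> carrier_vec k" "\<forall>i<k. (w + col_comb k c s0) \<bullet> c i = 0"
    using normal_equations_solvable[OF assms(1)] by blast
  ultimately show "\<forall>i<k. (w + col_comb k c s) \<bullet> c i = 0"
    using least_squares_min_eq_normal_solution[OF assms(1)] by blast
qed

lemma least_squares_min_unique:
  assumes "cols_independent k c"
  shows "\<exists>!s. least_squares_min k c w s"
proof -
  obtain s0 where s0: "s0 \<in> carrier_vec k" "\<forall>i<k. (w + col_comb k c s0) \<bullet> c i = 0"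
    using normal_equations_solvable[OF assms] by blast
  then have "least_squares_min k c w s0"
    using least_squares_min_iff[OF assms] by blast
  moreover have "s = s0" if "least_squares_min k c w s" for s
    using least_squares_min_eq_normal_solution[OF assms that s0] .
  ultimately show ?thesis
    by blast
qed

lemma norm_sq_decrease_normal_equations:
  assumes "\<forall>i<k. (w + col_comb k c s) \<bullet> c i = 0"
  shows "(norm w)^2 - (norm (w + col_comb k c s))^2 = - (\<Sum>i<k. s $ i * (w \<bullet> c i))"
proof -
  have "col_comb k c s \<bullet> (w + col_comb k c s) = 0"
    using assms by (simp add: inner_col_comb_left inner_commute[of "c _" "w + col_comb k c s"])
  then have "(norm (w + col_comb k c s))^2 = (norm w)^2 + col_comb k c s \<bullet> w"
    by (simp add: power2_norm_eq_inner inner_add_left inner_add_right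
        inner_commute[of w "col_comb k c s"])
  then show ?thesis
    by (simp add: inner_col_comb_left inner_commute[of "c _" w])
qed

lemma cramer_unit_vec:
  fixes A :: "'a::comm_ring_1 mat"
  assumes A: "A \<in> carrier_mat n n" and s: "s \<in> carrier_vec n" and j: "j < n"
    and sol: "A *\<^sub>v s = g \<cdot>\<^sub>v unit_vec n j"
  shows "s $ j * det A = g * det (mat_delete A j j)"
proof -
  define R where "R = replace_col A (g \<cdot>\<^sub>v unit_vec n j) j"
  have R: "R \<in> carrier_mat n n"
    using A by (simp add: R_def replace_col_def)
  have "s $ j * det A = det R"
    using cramer_lemma_mat[OF A s j] sol by (simp add: R_def)
  also have "\<dots> = (\<Sum>i<n. R $$ (i, j) * cofactor R i j)"
    by (rule laplace_expansion_column[OF R j])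
  also have "\<dots> = (\<Sum>i<n. if i = j then g * cofactor R i j else 0)"
    using A j by (intro sum.cong) (auto simp: R_def replace_col_def)
  also have "\<dots> = g * cofactor R j j"
    using j by simp
  also have "mat_delete R j j = mat_delete A j j"
    using A by (intro eq_matI) (auto simp: mat_delete_def R_def replace_col_def)
  then have "cofactor R j j = det (mat_delete A j j)"
    by (simp add: cofactor_def)
  finally show ?thesis .
qed

lemma mat_delete_gram_mat: "mat_delete (gram_mat (Suc k) c) k k = gram_mat k c"
  by (intro eq_matI) (simp_all add: mat_delete_def gram_mat_def)

lemma least_squares_unit_rhs:
  fixes c :: "nat \<Rightarrow> 'a::real_inner"
  assumes indep: "cols_independent (Suc k) c"
    and orth: "\<forall>i<Suc k. w \<bullet> c i = (if i = k then - g else 0)"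
  shows "\<exists>!s. least_squares_min (Suc k) c w s"
    and "s \<in> carrier_vec (Suc k) \<Longrightarrow>
      least_squares_min (Suc k) c w s \<longleftrightarrow> gram_mat (Suc k) c *\<^sub>v s = g \<cdot>\<^sub>v unit_vec (Suc k) k"
    and "least_squares_min (Suc k) c w s \<Longrightarrow>
      (norm w)^2 - (norm (w + col_comb (Suc k) c s))^2 = g * s $ k"
    and "least_squares_min (Suc k) c w s \<Longrightarrow>
      g * s $ k = g^2 * det (gram_mat k c) / det (gram_mat (Suc k) c)"
proof -
  have rhs: "vec (Suc k) (\<lambda>i. - (w \<bullet> c i)) = g \<cdot>\<^sub>v unit_vec (Suc k) k"
    using orth by (intro eq_vecI) (auto simp: unit_vec_def)
  have normal: "least_squares_min (Suc k) c w s \<longleftrightarrow> gram_mat (Suc k) c *\<^sub>v s = g \<cdot>\<^sub>v unit_vec (Suc k) k"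
    if "s \<in> carrier_vec (Suc k)" for s
    using least_squares_min_iff[OF indep that, of w] normal_equations_iff[OF that, of c w] rhs
    by simp
  show "\<exists>!s. least_squares_min (Suc k) c w s"
    using least_squares_min_unique[OF indep] .
  show "s \<in> carrier_vec (Suc k) \<Longrightarrow>
      least_squares_min (Suc k) c w s \<longleftrightarrow> gram_mat (Suc k) c *\<^sub>v s = g \<cdot>\<^sub>v unit_vec (Suc k) k"
    by (rule normal)
  assume min: "least_squares_min (Suc k) c w s"
  then have s: "s \<in> carrier_vec (Suc k)"
    by (simp add: least_squares_min_def)
  have "(norm w)^2 - (norm (w + col_comb (Suc k) c s))^2 = - (\<Sum>i<Suc k. s $ i * (w \<bullet> c i))"
    using norm_sq_decrease_normal_equations least_squares_min_iff[OF indep s] min by blast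
  also have "\<dots> = g * s $ k"
    using orth by (simp add: lessThan_Suc)
  finally show "(norm w)^2 - (norm (w + col_comb (Suc k) c s))^2 = g * s $ k" .
  have "s $ k * det (gram_mat (Suc k) c) = g * det (gram_mat k c)"
    using cramer_unit_vec[OF gram_mat_carrier s lessI] normal[OF s] min
    by (simp add: mat_delete_gram_mat)
  then show "g * s $ k = g^2 * det (gram_mat k c) / det (gram_mat (Suc k) c)"
    using det_gram_mat_neq_0[OF indep] by (simp add: field_simps power2_eq_square)
qed

section \<open>Affine geometry\<close>

lemma inner_closest_point_affine:
  fixes p q z :: "'a::euclidean_space"
  assumes "p \<in> affine hull S" "q \<in> affine hull S"
    and "\<forall>v\<in>affine hull S. norm (p - z) \<le> norm (v - z)"
  shows "(p - z) \<bullet> (q - p) = 0"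
proof -
  have closest: "\<forall>v\<in>affine hull S. dist z p \<le> dist z v"
    using assms(3) by (simp add: dist_norm norm_minus_commute)
  have "p + 1 *\<^sub>R (p - q) \<in> affine hull S"
    using mem_affine_3_minus[OF affine_affine_hull assms(1,1,2)] .
  then have "(z - p) \<bullet> ((p + 1 *\<^sub>R (p - q)) - p) \<le> 0"
    using any_closest_point_dot[OF convex_affine_hull closed_affine_hull] assms closest by blast
  moreover have "(z - p) \<bullet> (q - p) \<le> 0"
    using any_closest_point_dot[OF convex_affine_hull closed_affine_hull] assms closest by blast
  ultimately show ?thesis
    by (simp add: inner_diff_left inner_diff_right)
qed

lemma diff_comb_in_affine_hull:
  fixes x :: "nat \<Rightarrow> 'a::real_vector"
  shows "x k + (\<Sum>i<k. c i *\<^sub>R (x i - x k)) \<in> affine hull (x ` {..k})"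
proof -
  have "x ` {..k} = insert (x k) (x ` {..<k})"
    by (simp add: lessThan_Suc_atMost[symmetric] lessThan_Suc)
  moreover have "(\<Sum>i<k. c i *\<^sub>R (x i - x k)) \<in> span ((+) (- x k) ` x ` {..<k})"
    by (intro span_sum span_scale span_base) auto
  ultimately show ?thesis
    by (simp add: affine_hull_insert_span_gen)
qed

lemma affine_independent_imp_diffs_independent:
  fixes x :: "nat \<Rightarrow> 'a::real_vector"
  assumes indep: "\<not> affine_dependent (x ` {..k})" and inj: "inj_on x {..k}"
    and comb: "(\<Sum>i<k. t i *\<^sub>R (x i - x k)) = 0" and "i < k"
  shows "t i = 0"
proof -
  define d where "d i = x i - x k" for i
  have "x ` {..k} = insert (x k) (x ` {..<k})"
    by (simp add: lessThan_Suc_atMost[symmetric] lessThan_Suc)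
  moreover have "x k \<notin> x ` {..<k}"
    using inj_on_image_mem_iff[OF inj, of k "{..<k}"] by force
  ultimately have "\<not> dependent (d ` {..<k})"
    using indep affine_dependent_iff_dependent[of "x k" "x ` {..<k}"]
    by (simp add: d_def image_image)
  then have d_indep: "\<forall>u. (\<Sum>v\<in>d ` {..<k}. u v *\<^sub>R v) = 0 \<longrightarrow> (\<forall>v\<in>d ` {..<k}. u v = 0)"
    using real_vector.dependent_finite[of "d ` {..<k}"] by auto
  have inj_d: "inj_on d {..<k}"
    using inj by (auto simp: d_def inj_on_def)
  then have "(\<Sum>v\<in>d ` {..<k}. t (the_inv_into {..<k} d v) *\<^sub>R v) = (\<Sum>i<k. t i *\<^sub>R d i)"
    by (simp add: sum.reindex the_inv_into_f_f)
  also have "\<dots> = 0"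
    using comb by (simp add: d_def)
  finally have "t (the_inv_into {..<k} d (d i)) = 0"
    using d_indep[rule_format, of "\<lambda>v. t (the_inv_into {..<k} d v)"] \<open>i < k\<close> by blast
  then show ?thesis
    using inj_d \<open>i < k\<close> by (simp add: the_inv_into_f_f)
qed

lemma cols_independent_affine_extension:
  fixes x :: "nat \<Rightarrow> 'a::euclidean_space"
  assumes indep: "\<not> affine_dependent (x ` {..k})" and inj: "inj_on x {..k}"
    and y: "y \<notin> affine hull (x ` {..k})"
  shows "cols_independent (Suc k) (\<lambda>i. if i < k then x i - x k else y - x k)"
  unfolding cols_independent_def
proof (rule allI, rule impI)
  fix t
  assume "(\<Sum>i<Suc k. t i *\<^sub>R (if i < k then x i - x k else y - x k)) = 0"
  then have sum: "(\<Sum>i<k. t i *\<^sub>R (x i - x k)) + t k *\<^sub>R (y - x k) = 0"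
    by simp
  have tk: "t k = 0"
  proof (rule ccontr)
    assume "t k \<noteq> 0"
    have "t k *\<^sub>R (\<Sum>i<k. (- t i / t k) *\<^sub>R (x i - x k)) = - (\<Sum>i<k. t i *\<^sub>R (x i - x k))"
      using \<open>t k \<noteq> 0\<close> by (simp add: scaleR_sum_right sum_negf)
    also have "\<dots> = t k *\<^sub>R (y - x k)"
      using sum by (metis add.commute eq_neg_iff_add_eq_0)
    finally have "y = x k + (\<Sum>i<k. (- t i / t k) *\<^sub>R (x i - x k))"
      using \<open>t k \<noteq> 0\<close> by simp
    with y diff_comb_in_affine_hull show False
      by metis
  qed
  with sum have "\<forall>i<k. t i = 0"
    using affine_independent_imp_diffs_independent[OF indep inj] by simp
  with tk show "\<forall>i<Suc k. t i = 0"
    by (simp add: less_Suc_eq)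
qed

section \<open>The Kaczmarz sweep\<close>

lemma kproj_eq: "kproj a b j u = u - ((a j \<bullet> u - b j) / (norm (a j))^2) *\<^sub>R a j"
  unfolding kproj_def by (simp add: diff_divide_distrib scaleR_diff_left algebra_simps)

lemma norm_kproj_sub_sq:
  fixes a :: "nat \<Rightarrow> real^'n"
  assumes "a j \<noteq> 0" "a j \<bullet> z = b j"
  shows "(norm (kproj a b j u - z))^2 = (norm (u - z))^2 - ((a j \<bullet> u - b j) / norm (a j))^2"
proof -
  define c where "c = (a j \<bullet> u - b j) / (norm (a j))^2"
  have "a j \<bullet> (u - z) = c * (norm (a j))^2"
    using assms by (simp add: c_def inner_diff_right)
  then have "(norm (u - c *\<^sub>R a j - z))^2 = (norm (u - z))^2 - c^2 * (norm (a j))^2"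
    unfolding power2_norm_eq_inner by (simp add: algebra_simps inner_commute power2_eq_square)
  also have "c^2 * (norm (a j))^2 = ((a j \<bullet> u - b j) / norm (a j))^2"
    using assms(1) by (simp add: c_def power_divide power2_eq_square)
  finally show ?thesis by (simp add: kproj_eq c_def)
qed

lemma norm_kpart_sub_sq:
  fixes a :: "nat \<Rightarrow> real^'n"
  assumes "\<forall>j\<in>{1..k}. a j \<noteq> 0 \<and> a j \<bullet> z = b j"
  shows "(norm (kpart a b k u - z))^2 + (\<Sum>j = 1..k. (kresid a b j u)^2) = (norm (u - z))^2"
  using assms
proof (induction k)
  case (Suc k)
  then show ?case
    by (simp add: norm_kproj_sub_sq kresid_def)
qed simp

lemma inner_kcycle_diff:
  fixes a :: "nat \<Rightarrow> real^'n"
  assumes "\<forall>j\<in>{1..m}. a j \<noteq> 0 \<and> a j \<bullet> z = b j"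
  shows "(u - z) \<bullet> (kcycle a b m u - u)
    = - ((kresid_sqnorm a b m u + (norm (kcycle a b m u - u))^2) / 2)"
proof -
  have "kcycle a b m u - z = (kcycle a b m u - u) + (u - z)" by simp
  then have "(norm (kcycle a b m u - z))^2
      = (norm (kcycle a b m u - u))^2 + 2 * ((u - z) \<bullet> (kcycle a b m u - u)) + (norm (u - z))^2"
    unfolding power2_norm_eq_inner by (simp add: algebra_simps inner_commute)
  with norm_kpart_sub_sq[OF assms, of u] show ?thesis
    unfolding kcycle_def kresid_sqnorm_def by (simp add: field_simps)
qed

lemma inner_kaczmarz_cols:
  fixes p :: "nat \<Rightarrow> real^'n"
  assumes rows: "\<forall>j\<in>{1..m}. a j \<noteq> 0 \<and> a j \<bullet> z = b j"
    and closest: "\<forall>v\<in>affine hull (p ` {..k}). norm (p k - z) \<le> norm (v - z)"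
    and "i \<le> k"
  shows "(p k - z) \<bullet> (if i < k then p i - p k else kcycle a b m (p k) - p k)
    = (if i = k then - ((kresid_sqnorm a b m (p k) + (norm (kcycle a b m (p k) - p k))^2) / 2)
       else 0)"
proof (cases "i = k")
  case True
  then show ?thesis
    using inner_kcycle_diff[OF rows] by simp
next
  case False
  with \<open>i \<le> k\<close> have "i < k"
    by simp
  moreover have "p i \<in> affine hull (p ` {..k})" "p k \<in> affine hull (p ` {..k})"
    using \<open>i \<le> k\<close> by (auto intro!: hull_inc)
  ultimately show ?thesis
    using inner_closest_point_affine[OF _ _ closest] by simp
qed

theorem theorem7:
  fixes a :: "nat \<Rightarrow> real^'n" and b :: "nat \<Rightarrow> real" and m :: nat
    and l :: nat and x :: "nat \<Rightarrow> real^'n" and xstar :: "real^'n"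
  assumes rows_nz: "\<forall>j\<in>{1..m}. a j \<noteq> 0"
    and b_range: "\<exists>z. \<forall>j\<in>{1..m}. a j \<bullet> z = b j"
    and sol: "\<forall>j\<in>{1..m}. a j \<bullet> xstar = b j"
    and l_pos: "l \<ge> 1"
    and inj: "inj_on x {1..l}"
    and aff_indep: "\<not> affine_dependent (x ` {1..l})"
    and argmin: "\<forall>\<xi>\<in>affine hull (x ` {1..l}). (norm (x l - xstar))^2 \<le> (norm (\<xi> - xstar))^2"
    and notin: "kcycle a b m (x l) \<notin> affine hull (x ` {1..l})"
  shows
    "let col = (\<lambda>i. if i < l - 1 then x (i + 1) - x l else kcycle a b m (x l) - x l);
         Mv = (\<lambda>s. \<Sum>i<l. vec_index s i *\<^sub>R col i);
         MtM = mat l l (\<lambda>(i, j). col i \<bullet> col j);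
         VtV = mat (l - 1) (l - 1) (\<lambda>(i, j). col i \<bullet> col j);
         \<gamma> = (kresid_sqnorm a b m (x l) + (norm (kcycle a b m (x l) - x l))^2) / 2;
         f = (\<lambda>s. (norm (x l + Mv s - xstar))^2);
         is_min = (\<lambda>s. s \<in> carrier_vec l \<and> (\<forall>t\<in>carrier_vec l. f s \<le> f t))
     in (\<exists>!s. is_min s)
        \<and> (\<forall>s\<in>carrier_vec l. is_min s \<longleftrightarrow> MtM *\<^sub>v s = \<gamma> \<cdot>\<^sub>v unit_vec l (l - 1))
        \<and> (\<forall>s. is_min s \<longrightarrow>
              (norm (x l - xstar))^2 - f s = \<gamma> * vec_index s (l - 1)
            \<and> \<gamma> * vec_index s (l - 1) = \<gamma>^2 * Determinant.det VtV / Determinant.det MtM)"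
proof -
  obtain k where l: "l = Suc k"
    using l_pos by (cases l) auto
  define c where "c = (\<lambda>i. if i < l - 1 then x (i + 1) - x l else kcycle a b m (x l) - x l)"
  define \<gamma> where "\<gamma> = (kresid_sqnorm a b m (x l) + (norm (kcycle a b m (x l) - x l))^2) / 2"
  have c_eq: "c = (\<lambda>i. if i < k then x (Suc i) - x (Suc k) else kcycle a b m (x (Suc k)) - x (Suc k))"
    unfolding c_def l Suc_eq_plus1 by simp
  have hull: "(\<lambda>i. x (Suc i)) ` {..k} = x ` {1..l}"
    by (simp only: l image_Suc_atMost[symmetric] image_image)
  have "inj_on (\<lambda>i. x (Suc i)) {..k}"
    using comp_inj_on[of Suc "{..k}" x] inj by (simp add: l image_Suc_atMost o_def)
  then have indep: "cols_independent (Suc k) c"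
    using cols_independent_affine_extension[OF aff_indep[folded hull] _ notin[folded hull]]
    unfolding c_eq l by simp
  have orth: "\<forall>i<Suc k. (x l - xstar) \<bullet> c i = (if i = k then - \<gamma> else 0)"
    using inner_kaczmarz_cols[of m a xstar b "\<lambda>i. x (Suc i)" k] rows_nz sol argmin
    unfolding c_eq \<gamma>_def hull l by (simp add: less_Suc_eq_le)
  have residual: "x l + (\<Sum>i<l. s $ i *\<^sub>R c i) - xstar = (x l - xstar) + col_comb l c s" for s
    by (simp add: col_comb_def)
  show ?thesis
    using least_squares_unit_rhs[OF indep orth]
    unfolding c_def[symmetric] \<gamma>_def[symmetric]
    unfolding Let_def residual gram_mat_def[symmetric] least_squares_min_def[symmetric]
    unfolding l diff_Suc_1
    by blast
qed

end
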